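(* Let $L$ be an extension of $\mathbb{Z}_\mathrm{max}$ with $\mathrm{ui}(L/\mathbb{Z}_\mathrm{max})<\infty$. Then $L\cong F^{(n)}$ as extensions of $\mathbb{Z}_\mathrm{max}$ for some positive integer $n$.
   Context: A semifield is a commutative semiring (both operations commutative monoids, distributive law) in which every nonzero element is a unit. $\mathbb{Z}_\mathrm{max}=\mathbb{Z}\cup\{-\infty\}$ is the semifield with addition $\max$ and multiplication ordinary addition; writing $u$ for the integer $1$ in it, $\mathbb{Z}_\mathrm{max}=\{0\}\cup\{u^k:k\in\mathbb{Z}\}$. An extension of a semifield $K$ is a semifield $L$ with an injective homomorphism $K\to L$. The unit index is $\mathrm{ui}(L/K)=|L^\times/K^\times|$. For a positive integer $n$, $F^{(n)}$ is the extension of $\mathbb{Z}_\mathrm{max}$ given by $\mathbb{Z}_\mathrm{max}$ itself with embedding $u^k\mapsto u^{nk}$, $0\mapsto 0$. An isomorphism of extensions is a semiring isomorphism compatible with the embeddings. *)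

theory Defs
  imports "HOL-Algebra.Algebra"
begin

definition semifield :: "('a, 'b) ring_scheme \<Rightarrow> bool" where
  "semifield R \<longleftrightarrow> semiring R \<and> comm_monoid R \<and>
     (\<forall>x\<in>carrier R. x \<noteq> \<zero>\<^bsub>R\<^esub> \<longrightarrow> x \<in> Units R)"

definition semiring_hom :: "('a, 'c) ring_scheme \<Rightarrow> ('b, 'd) ring_scheme \<Rightarrow> ('a \<Rightarrow> 'b) set" where
  "semiring_hom R S = {h. h \<in> ring_hom R S \<and> h \<zero>\<^bsub>R\<^esub> = \<zero>\<^bsub>S\<^esub>}"

text \<open>Z_max = Z with -infinity (None); element Some k is u^k.\<close>
fun zmax_add :: "int option \<Rightarrow> int option \<Rightarrow> int option" where
  "zmax_add None y = y"
| "zmax_add x None = x"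
| "zmax_add (Some a) (Some b) = Some (max a b)"

fun zmax_mult :: "int option \<Rightarrow> int option \<Rightarrow> int option" where
  "zmax_mult (Some a) (Some b) = Some (a + b)"
| "zmax_mult _ _ = None"

definition Zmax :: "int option ring" where
  "Zmax = \<lparr>carrier = UNIV, monoid.mult = zmax_mult, one = Some 0,
           ring.zero = None, ring.add = zmax_add\<rparr>"

definition semifield_ext :: "('a, 'c) ring_scheme \<Rightarrow> ('b, 'd) ring_scheme \<Rightarrow> ('a \<Rightarrow> 'b) \<Rightarrow> bool" where
  "semifield_ext K L h \<longleftrightarrow> semifield K \<and> semifield L \<and> h \<in> semiring_hom K L \<and> inj_on h (carrier K)"

text \<open>The cosets L^x / h(K^x); the unit index ui(L/K) is their number.\<close>
definition unit_cosets :: "('a, 'c) ring_scheme \<Rightarrow> ('b, 'd) ring_scheme \<Rightarrow> ('a \<Rightarrow> 'b) \<Rightarrow> 'b set set" where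
  "unit_cosets K L h = rcosets\<^bsub>units_of L\<^esub> (h ` Units K)"

definition Fn_emb :: "int \<Rightarrow> int option \<Rightarrow> int option" where
  "Fn_emb n x = map_option (\<lambda>k. n * k) x"

definition ext_iso :: "('a, 'c) ring_scheme \<Rightarrow> ('b, 'd) ring_scheme \<Rightarrow> ('a \<Rightarrow> 'b)
     \<Rightarrow> ('e, 'f) ring_scheme \<Rightarrow> ('a \<Rightarrow> 'e) \<Rightarrow> ('b \<Rightarrow> 'e) \<Rightarrow> bool" where
  "ext_iso K L h L' h' \<phi> \<longleftrightarrow> \<phi> \<in> semiring_hom L L' \<and> bij_betw \<phi> (carrier L) (carrier L') \<and>
     (\<forall>x\<in>carrier K. \<phi> (h x) = h' x)"

end

theory Submission
  imports Defs
begin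

text \<open>Since \<open>\<one> \<oplus> \<one> = \<one>\<close> holds in \<open>\<int>\<^sub>m\<^sub>a\<^sub>x\<close>, every extension \<open>L\<close> is an idempotent
  semifield, ordered by \<open>a \<le> b \<longleftrightarrow> a \<oplus> b = b\<close>. A geometric-sum argument shows that
  \<open>\<one> \<le> x\<^sup>n\<close> implies \<open>\<one> \<le> x\<close>; in particular \<open>L\<^sup>\<times>\<close> is torsion-free. If \<open>u\<close> is the image
  of the generator of \<open>\<int>\<^sub>m\<^sub>a\<^sub>x\<^sup>\<times>\<close> and \<open>N\<close> the (finite) unit index, then \<open>x\<^sup>N = u\<^sup>k\<close>
  for a unique \<open>k\<close>, and \<open>x \<mapsto> k\<close> embeds \<open>L\<^sup>\<times>\<close> into \<open>\<int>\<close>. So \<open>L\<^sup>\<times>\<close> is infinite cyclic, generated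
  by some \<open>v\<close> with \<open>u = v\<^sup>n\<close>, \<open>n > 0\<close>; from \<open>\<one> \<le> u\<close> we get \<open>\<one> \<le> v\<close>, so \<open>v\<^sup>a \<oplus> v\<^sup>b = v\<^bsup>max a b\<^esup>\<close>.
  Hence \<open>\<zero> \<mapsto> -\<infinity>\<close>, \<open>v\<^sup>k \<mapsto> k\<close> is an isomorphism onto \<open>\<int>\<^sub>m\<^sub>a\<^sub>x\<close> turning the embedding into
  \<open>k \<mapsto> n k\<close>, i.e. into that of \<open>F\<^sup>(\<^sup>n\<^sup>)\<close>.\<close>

lemma (in normal) pow_card_rcosets_mem:
  assumes "x \<in> carrier G"
  shows "x [^] card (rcosets H) \<in> H"
proof -
  have "order (G Mod H) = card (rcosets H)"
    by (simp add: order_def FactGroup_def)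
  then have "(H #> x) [^]\<^bsub>G Mod H\<^esub> card (rcosets H) = \<one>\<^bsub>G Mod H\<^esub>"
    using group.pow_order_eq_1[OF factorgroup_is_group] assms
    by (metis carrier_FactGroup image_eqI)
  then have "H #> x [^] card (rcosets H) = H"
    by (simp add: FactGroup_pow assms)
  then show ?thesis
    using coset_join1 assms subgroup_axioms by blast
qed

lemma (in comm_group) embeds_into_integers_if_finite_index:
  assumes u: "u \<in> carrier G" and u_inj: "inj (\<lambda>k::int. u [^] k)"
    and torsion_free: "\<And>x n. x \<in> carrier G \<Longrightarrow> n > 0 \<Longrightarrow> x [^] (n::nat) = \<one> \<Longrightarrow> x = \<one>"
    and fin: "finite (rcosets (range (\<lambda>k::int. u [^] k)))"
  shows "\<exists>g \<in> hom G integer_group. inj_on g (carrier G) \<and> g u > 0"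
proof -
  define H where "H = range (\<lambda>k::int. u [^] k)"
  define N where "N = card (rcosets H)"
  have "normal H G"
    unfolding H_def by (rule subgroup_imp_normal[OF subgroup_of_powers[OF u]])
  then have pow_N: "x [^] N \<in> H" if "x \<in> carrier G" for x
    unfolding N_def using that by (rule normal.pow_card_rcosets_mem)
  have "H \<in> rcosets H"
    using subgroup.subset[OF subgroup_of_powers[OF u]] unfolding H_def
    by (metis coset_mult_one rcosetsI one_closed)
  then have N_pos: "N > 0"
    unfolding N_def H_def using fin card_gt_0_iff by blast
  define g where "g x = the_inv (\<lambda>k::int. u [^] k) (x [^] N)" for x
  have g: "x [^] N = u [^] g x" if "x \<in> carrier G" for x
    using pow_N[OF that] u_inj unfolding g_def H_def by (simp add: f_the_inv_into_f)
  have g_eqI: "g x = k" if "x [^] N = u [^] k" for x k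
    using that u_inj unfolding g_def by (simp add: the_inv_f_f)
  have "g \<in> hom G integer_group"
  proof (rule homI)
    fix x y assume xy: "x \<in> carrier G" "y \<in> carrier G"
    have "(x \<otimes> y) [^] N = x [^] N \<otimes> y [^] N"
      using xy by (simp add: nat_pow_distrib)
    also have "\<dots> = u [^] (g x + g y)"
      using xy u g by (simp add: int_pow_mult)
    finally show "g (x \<otimes> y) = g x \<otimes>\<^bsub>integer_group\<^esub> g y"
      by (simp add: g_eqI)
  qed simp
  moreover have "inj_on g (carrier G)"
  proof (rule inj_onI)
    fix x y assume xy: "x \<in> carrier G" "y \<in> carrier G" and "g x = g y"
    then have "x [^] N = y [^] N"
      using g by simp
    then have "(x \<otimes> inv y) [^] N = \<one>"
      using xy by (simp add: nat_pow_distrib nat_pow_inv)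
    then have "x \<otimes> inv y = \<one>"
      using torsion_free N_pos xy by simp
    then show "x = y"
      using inv_solve_right[of \<one> x y] xy by simp
  qed
  moreover have "g u = int N"
    using u by (simp add: g_eqI int_pow_int)
  ultimately show ?thesis
    using N_pos by auto
qed

lemma (in group) infinite_cyclic_if_embeds_into_integers:
  assumes g: "g \<in> hom G integer_group" and g_inj: "inj_on g (carrier G)"
    and u: "u \<in> carrier G" and g_u: "g u > 0"
  obtains v n where "v \<in> carrier G" "carrier G = range (\<lambda>k::int. v [^] k)"
    "inj (\<lambda>k::int. v [^] k)" "(n::int) > 0" "u = v [^] n"
proof -
  have g_pow: "g (x [^] k) = k * g x" if "x \<in> carrier G" for x and k :: int
    using hom_int_pow[OF g that] by simp
  define d where "d = (LEAST d. d > 0 \<and> (\<exists>x \<in> carrier G. g x = int d))"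
  have "d > 0 \<and> (\<exists>x \<in> carrier G. g x = int d)"
    unfolding d_def by (rule LeastI[of _ "nat (g u)"]) (use u g_u in auto)
  then obtain v where v: "v \<in> carrier G" "g v = int d" and d_pos: "d > 0"
    by blast
  have log: "x = v [^] (g x div int d)" if x: "x \<in> carrier G" for x
  proof -
    define r where "r = g x mod int d"
    have y: "x \<otimes> v [^] (- (g x div int d)) \<in> carrier G"
      using x v by simp
    have g_y: "g (x \<otimes> v [^] (- (g x div int d))) = r"
      using x v g_pow hom_mult[OF g] unfolding r_def
      by (simp add: minus_div_mult_eq_mod[symmetric] algebra_simps)
    have r_bounds: "r \<ge> 0" "r < int d"
      using d_pos unfolding r_def by auto
    have "r = 0"
    proof (rule ccontr)
      assume "r \<noteq> 0"
      then have "nat r > 0 \<and> (\<exists>y \<in> carrier G. g y = int (nat r))"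
        using y g_y r_bounds by auto
      then have "d \<le> nat r"
        unfolding d_def by (rule Least_le)
      then show False
        using r_bounds by simp
    qed
    then have "g x = g (v [^] (g x div int d))"
      using v g_pow unfolding r_def by (metis add.right_neutral mult.commute mult_div_mod_eq)
    then show ?thesis
      using x v by (meson g_inj inj_onD int_pow_closed)
  qed
  then have gen: "carrier G = range (\<lambda>k::int. v [^] k)"
    using v by (auto intro: int_pow_closed)
  have v_inj: "inj (\<lambda>k::int. v [^] k)"
    using g_pow v d_pos by (intro injI) (metis mult_cancel_right of_nat_0_less_iff less_irrefl)
  obtain q :: int where q: "u = v [^] q"
    using log[OF u] by blast
  have "q > 0"
  proof -
    have "g u = q * int d"
      using q g_pow v by simp
    then show ?thesis
      using g_u d_pos by (simp add: zero_less_mult_iff)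
  qed
  show ?thesis
    using v(1) gen v_inj \<open>q > 0\<close> q by (rule that)
qed

lemma Zmax_simps [simp]:
  "carrier Zmax = UNIV" "monoid.mult Zmax = zmax_mult" "one Zmax = Some 0"
  "ring.zero Zmax = None" "ring.add Zmax = zmax_add"
  by (simp_all add: Zmax_def)

lemma Units_Zmax: "Units Zmax = range Some"
proof -
  have "x \<in> Units Zmax \<longleftrightarrow> x \<in> range Some" for x
  proof (cases x)
    case None
    have "zmax_mult y None \<noteq> Some 0" for y
      by (cases y) auto
    then show ?thesis
      using None by (auto simp: Units_def)
  next
    case (Some k)
    then show ?thesis
      by (auto simp: Units_def intro!: exI[of _ "Some (-k)"])
  qed
  then show ?thesis
    by blast
qed

primrec geom_sum :: "('a, 'b) ring_scheme \<Rightarrow> 'a \<Rightarrow> nat \<Rightarrow> 'a" where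
  "geom_sum R x 0 = \<zero>\<^bsub>R\<^esub>"
| "geom_sum R x (Suc m) = geom_sum R x m \<oplus>\<^bsub>R\<^esub> x [^]\<^bsub>R\<^esub> m"

locale idempotent_semifield = semiring L + comm_monoid L for L (structure) +
  assumes one_add_one [simp]: "\<one> \<oplus> \<one> = \<one>"
    and zero_neq_one: "\<zero> \<noteq> \<one>"
    and nonzero_Units: "\<lbrakk>x \<in> carrier L; x \<noteq> \<zero>\<rbrakk> \<Longrightarrow> x \<in> Units L"
begin

lemma add_idem [simp]: "x \<in> carrier L \<Longrightarrow> x \<oplus> x = x"
  using r_distr[of \<one> \<one> x] by simp

lemma add_eq_zero_iff: "\<lbrakk>a \<in> carrier L; b \<in> carrier L\<rbrakk> \<Longrightarrow> a \<oplus> b = \<zero> \<longleftrightarrow> a = \<zero> \<and> b = \<zero>"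
  by (metis a_assoc a_comm add_idem l_zero)

lemma geom_sum_closed [simp]: "x \<in> carrier L \<Longrightarrow> geom_sum L x m \<in> carrier L"
  by (induction m) auto

lemma geom_sum_Suc': "x \<in> carrier L \<Longrightarrow> geom_sum L x (Suc m) = x \<otimes> geom_sum L x m \<oplus> \<one>"
proof (induction m)
  case (Suc m)
  have "x \<otimes> geom_sum L x (Suc m) \<oplus> \<one> = (x \<otimes> geom_sum L x m \<oplus> \<one>) \<oplus> x [^] Suc m"
    using Suc.prems by (simp add: r_distr a_ac m_comm[of "x [^] m" x])
  then show ?case
    using Suc by simp
qed simp

text \<open>The
  geometric sum \<open>T = \<one> \<oplus> x \<oplus> \<dots> \<oplus> x\<^sup>n\<^sup>-\<^sup>1\<close> satisfies \<open>T \<oplus> x T = x T\<close>, and \<open>T\<close>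
  is a unit because it dominates \<open>\<one>\<close>; cancelling \<open>T\<close> from \<open>(\<one> \<oplus> x) T = x T\<close>
  gives the claim.\<close>
lemma one_le_of_one_le_pow:
  assumes x: "x \<in> carrier L" and n: "(n::nat) > 0" and le: "\<one> \<oplus> x [^] n = x [^] n"
  shows "\<one> \<oplus> x = x"
proof -
  obtain m where m: "n = Suc m"
    using n gr0_implies_Suc by blast
  define P where "P = geom_sum L x m"
  define T where "T = geom_sum L x n"
  have P: "P \<in> carrier L" and T: "T \<in> carrier L"
    using x by (simp_all add: P_def T_def)
  have T_eq: "T = x \<otimes> P \<oplus> \<one>"
    using geom_sum_Suc'[OF x] by (simp add: T_def P_def m)
  have xT_eq: "x \<otimes> T = x \<otimes> P \<oplus> x [^] n"
    using x P by (simp add: T_def P_def m r_distr m_comm[of "x [^] m" x])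
  have absorb: "T \<oplus> x \<otimes> T = x \<otimes> T"
  proof -
    have "T \<oplus> x \<otimes> T = (x \<otimes> P \<oplus> \<one>) \<oplus> (x \<otimes> P \<oplus> x [^] n)"
      unfolding xT_eq by (simp only: T_eq)
    also have "\<dots> = (x \<otimes> P \<oplus> x \<otimes> P) \<oplus> (\<one> \<oplus> x [^] n)"
      using x P by (simp add: a_ac del: add_idem)
    also have "\<dots> = x \<otimes> P \<oplus> x [^] n"
      using x P le by simp
    finally show ?thesis
      by (simp only: xT_eq)
  qed
  have "T \<in> Units L"
    using T x P zero_neq_one by (intro nonzero_Units) (auto simp: T_eq add_eq_zero_iff)
  moreover have "T \<otimes> (\<one> \<oplus> x) = T \<otimes> x"
    using x T absorb by (simp add: r_distr m_comm[of T x])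
  ultimately show ?thesis
    using x by simp
qed

lemma Units_pow_eq_one_imp_one:
  assumes x: "x \<in> Units L" and n: "(n::nat) > 0" and x_n: "x [^] n = \<one>"
  shows "x = \<one>"
proof -
  have xc: "x \<in> carrier L" "inv x \<in> carrier L"
    using x by auto
  have "inv x [^] n = inv x [^] n \<otimes> x [^] n"
    using xc x_n by simp
  also have "\<dots> = \<one>"
    using x xc by (simp add: nat_pow_distrib[symmetric])
  finally have "\<one> \<oplus> inv x = inv x"
    using one_le_of_one_le_pow[OF xc(2) n] by simp
  then have "x \<otimes> (\<one> \<oplus> inv x) = \<one>"
    using x by simp
  then have "x \<oplus> \<one> = \<one>"
    using x xc by (simp add: r_distr)
  moreover have "\<one> \<oplus> x = x"
    using one_le_of_one_le_pow[OF xc(1) n] x_n by simp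
  ultimately show ?thesis
    using xc by (simp add: a_comm)
qed

lemma one_le_pow:
  assumes x: "x \<in> carrier L" and one_le: "\<one> \<oplus> x = x"
  shows "\<one> \<oplus> x [^] (n::nat) = x [^] n"
proof (induction n)
  case (Suc n)
  have "x [^] Suc n = x [^] n \<otimes> (\<one> \<oplus> x)"
    using one_le by simp
  also have "\<dots> = x [^] n \<oplus> x [^] Suc n"
    using x by (simp add: r_distr)
  finally have step: "x [^] Suc n = x [^] n \<oplus> x [^] Suc n" .
  have "\<one> \<oplus> x [^] Suc n = (\<one> \<oplus> x [^] n) \<oplus> x [^] Suc n"
    using x by (subst step) (simp add: a_assoc)
  also have "\<dots> = x [^] Suc n"
    by (simp only: Suc step[symmetric])
  finally show ?case .
qed simp

sublocale units: comm_group "units_of L"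
  by (rule units_comm_group)

lemma add_units_pow_eq_max:
  assumes v: "v \<in> Units L" and one_le: "\<one> \<oplus> v = v"
  shows "v [^]\<^bsub>units_of L\<^esub> a \<oplus> v [^]\<^bsub>units_of L\<^esub> b = v [^]\<^bsub>units_of L\<^esub> (max a b :: int)"
proof -
  have le: "v [^]\<^bsub>units_of L\<^esub> a \<oplus> v [^]\<^bsub>units_of L\<^esub> b = v [^]\<^bsub>units_of L\<^esub> b"
    if "a \<le> b" for a b :: int
  proof -
    have vU: "v \<in> carrier (units_of L)"
      using v by (simp add: units_of_carrier)
    have d: "v [^]\<^bsub>units_of L\<^esub> (b - a) = v [^] nat (b - a)"
      using that v by (metis int_pow_int nat_0_le diff_ge_0_iff_ge units_of_pow)
    have "v [^]\<^bsub>units_of L\<^esub> b = v [^]\<^bsub>units_of L\<^esub> a \<otimes> v [^] nat (b - a)"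
      using units.int_pow_mult[OF vU, of a "b - a"] d by (simp add: units_of_mult)
    moreover have "v [^]\<^bsub>units_of L\<^esub> a \<in> carrier L"
      using units.int_pow_closed[OF vU] by (simp add: units_of_carrier Units_closed)
    moreover have "\<one> \<oplus> v [^] nat (b - a) = v [^] nat (b - a)"
      using v one_le by (simp add: one_le_pow Units_closed)
    ultimately show ?thesis
      using v r_distr[of \<one> "v [^] nat (b - a)" "v [^]\<^bsub>units_of L\<^esub> a"]
      by (simp add: Units_closed)
  qed
  show ?thesis
    using le[of a b] le[of b a] v a_comm units.int_pow_closed
    by (cases "a \<le> b") (auto simp: max_def units_of_carrier Units_closed)
qed

lemma zero_notin_Units: "\<zero> \<notin> Units L"
  using zero_neq_one by (metis Units_r_inv Units_inv_closed Units_closed l_null)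

lemma Zmax_iso_if_Units_infinite_cyclic:
  assumes v: "v \<in> Units L" and gen: "Units L = range (\<lambda>k::int. v [^]\<^bsub>units_of L\<^esub> k)"
    and inj: "inj (\<lambda>k::int. v [^]\<^bsub>units_of L\<^esub> k)" and one_le: "\<one> \<oplus> v = v"
  obtains \<phi> where "\<phi> \<in> semiring_hom L Zmax" "bij_betw \<phi> (carrier L) (carrier Zmax)"
    "\<And>k. \<phi> (v [^]\<^bsub>units_of L\<^esub> k) = Some k"
proof -
  define E where "E k = v [^]\<^bsub>units_of L\<^esub> (k::int)" for k
  have vU: "v \<in> carrier (units_of L)"
    using v by (simp add: units_of_carrier)
  have E_Units: "E k \<in> Units L" for k
    unfolding E_def using units.int_pow_closed[OF vU] by (simp add: units_of_carrier)
  then have E_carrier: "E k \<in> carrier L" and E_nonzero: "E k \<noteq> \<zero>" for k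
    using zero_notin_Units by (metis Units_closed)+
  have E_mult: "E a \<otimes> E b = E (a + b)" for a b
    unfolding E_def using units.int_pow_mult[OF vU] by (simp add: units_of_mult)
  have E_add: "E a \<oplus> E b = E (max a b)" for a b
    unfolding E_def using add_units_pow_eq_max[OF v one_le] .
  have E_zero: "E 0 = \<one>"
    unfolding E_def by (simp add: units_of_one)
  have zero_or_E: "x = \<zero> \<or> (\<exists>k. x = E k)" if "x \<in> carrier L" for x
    using that nonzero_Units gen unfolding E_def by blast
  define \<phi> where "\<phi> x = (if x = \<zero> then None else Some (the_inv E x))" for x
  have \<phi>_E: "\<phi> (E k) = Some k" for k
    using E_nonzero inj by (simp add: \<phi>_def E_def[abs_def] the_inv_f_f)
  have \<phi>_zero: "\<phi> \<zero> = None"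
    by (simp add: \<phi>_def)
  have "\<phi> (x \<otimes> y) = zmax_mult (\<phi> x) (\<phi> y)" "\<phi> (x \<oplus> y) = zmax_add (\<phi> x) (\<phi> y)"
    if "x \<in> carrier L" "y \<in> carrier L" for x y
    using zero_or_E[OF that(1)] zero_or_E[OF that(2)] E_carrier
    by (auto simp: \<phi>_E \<phi>_zero E_mult E_add)
  moreover have "\<phi> \<one> = Some 0"
    using \<phi>_E[of 0] by (simp add: E_zero)
  ultimately have "\<phi> \<in> semiring_hom L Zmax"
    unfolding semiring_hom_def ring_hom_def by (simp add: \<phi>_zero)
  moreover have "bij_betw \<phi> (carrier L) (carrier Zmax)"
  proof (rule bij_betw_imageI)
    show "inj_on \<phi> (carrier L)"
    proof (rule inj_onI)
      fix x y assume "x \<in> carrier L" "y \<in> carrier L" "\<phi> x = \<phi> y"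
      then show "x = y"
        using zero_or_E[of x] zero_or_E[of y] by (auto simp: \<phi>_E \<phi>_zero)
    qed
    have "z \<in> \<phi> ` carrier L" for z
      using E_carrier \<phi>_E[symmetric] \<phi>_zero[symmetric] by (cases z) auto
    then show "\<phi> ` carrier L = carrier Zmax"
      by auto
  qed
  ultimately show ?thesis
    using \<phi>_E unfolding E_def by (rule that)
qed
end

lemma (in idempotent_semifield) Units_infinite_cyclic_if_finite_index:
  assumes u: "u \<in> Units L" and u_inj: "inj (\<lambda>k::int. u [^]\<^bsub>units_of L\<^esub> k)"
    and fin: "finite (rcosets\<^bsub>units_of L\<^esub> (range (\<lambda>k::int. u [^]\<^bsub>units_of L\<^esub> k)))"
    and one_le: "\<one> \<oplus> u = u"
  obtains v n where "v \<in> Units L" "Units L = range (\<lambda>k::int. v [^]\<^bsub>units_of L\<^esub> k)"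
    "inj (\<lambda>k::int. v [^]\<^bsub>units_of L\<^esub> k)" "(n::int) > 0" "u = v [^]\<^bsub>units_of L\<^esub> n" "\<one> \<oplus> v = v"
proof -
  have u_U: "u \<in> carrier (units_of L)"
    using u by (simp add: units_of_carrier)
  have torsion_free: "x = \<one>\<^bsub>units_of L\<^esub>"
    if "x \<in> carrier (units_of L)" "n > 0" "x [^]\<^bsub>units_of L\<^esub> (n::nat) = \<one>\<^bsub>units_of L\<^esub>" for x n
    using that Units_pow_eq_one_imp_one[of x n] by (simp add: units_of_carrier units_of_pow units_of_one)
  have "\<exists>g \<in> hom (units_of L) integer_group. inj_on g (carrier (units_of L)) \<and> g u > 0"
    by (rule units.embeds_into_integers_if_finite_index[OF u_U u_inj _ fin]) (rule torsion_free)
  then obtain g where "g \<in> hom (units_of L) integer_group" "inj_on g (carrier (units_of L))" "g u > 0"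
    by blast
  then obtain v n where v: "v \<in> carrier (units_of L)"
    "carrier (units_of L) = range (\<lambda>k::int. v [^]\<^bsub>units_of L\<^esub> k)"
    "inj (\<lambda>k::int. v [^]\<^bsub>units_of L\<^esub> k)" and n: "(n::int) > 0" "u = v [^]\<^bsub>units_of L\<^esub> n"
    by (rule units.infinite_cyclic_if_embeds_into_integers[OF _ _ u_U])
  have "u = v [^]\<^bsub>units_of L\<^esub> nat n"
    using n int_pow_int[of "units_of L" v "nat n"] by simp
  moreover have v_Units: "v \<in> Units L"
    using v(1) by (simp add: units_of_carrier)
  ultimately have "u = v [^] nat n"
    by (simp add: units_of_pow)
  then have "\<one> \<oplus> v [^] nat n = v [^] nat n"
    using one_le by (simp only:)
  then have "\<one> \<oplus> v = v"
    using one_le_of_one_le_pow[OF Units_closed[OF v_Units], of "nat n"] n(1) by simp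
  with v n show ?thesis
    by (intro that) (simp_all add: units_of_carrier)
qed

lemma idempotent_semifield_if_ext_Zmax:
  assumes "semifield_ext Zmax L h"
  shows "idempotent_semifield L"
proof -
  have hom: "h \<in> ring_hom Zmax L" and h_zero: "h None = \<zero>\<^bsub>L\<^esub>" and "inj h"
    using assms by (auto simp: semifield_ext_def semiring_hom_def)
  then have "\<zero>\<^bsub>L\<^esub> \<noteq> \<one>\<^bsub>L\<^esub>"
    using ring_hom_one[OF hom] by (metis Zmax_simps(3) injD option.distinct(1))
  moreover have "\<one>\<^bsub>L\<^esub> \<oplus>\<^bsub>L\<^esub> \<one>\<^bsub>L\<^esub> = \<one>\<^bsub>L\<^esub>"
    using ring_hom_add[OF hom, of "Some 0" "Some 0"] ring_hom_one[OF hom] by simp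
  ultimately show ?thesis
    using assms unfolding semifield_ext_def semifield_def idempotent_semifield_def
      idempotent_semifield_axioms_def by blast
qed

lemma ext_Zmax_generator:
  assumes ext: "semifield_ext Zmax L h"
  defines "u \<equiv> h (Some 1)"
  shows "u \<in> Units L" and "\<And>k. h (Some k) = u [^]\<^bsub>units_of L\<^esub> k"
    and "inj (\<lambda>k::int. u [^]\<^bsub>units_of L\<^esub> k)"
    and "unit_cosets Zmax L h = rcosets\<^bsub>units_of L\<^esub> (range (\<lambda>k::int. u [^]\<^bsub>units_of L\<^esub> k))"
    and "\<one>\<^bsub>L\<^esub> \<oplus>\<^bsub>L\<^esub> u = u"
proof -
  interpret idempotent_semifield L
    using ext by (rule idempotent_semifield_if_ext_Zmax)
  have hom: "h \<in> ring_hom Zmax L" and h_inj: "inj h"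
    using ext by (auto simp: semifield_ext_def semiring_hom_def)
  have h_mult: "h (Some (a + b)) = h (Some a) \<otimes>\<^bsub>L\<^esub> h (Some b)" for a b
    using ring_hom_mult[OF hom, of "Some a" "Some b"] by simp
  have Units: "h (Some a) \<in> Units L" for a
    using h_mult[of a "-a"] h_mult[of "-a" a] ring_hom_one[OF hom] ring_hom_closed[OF hom]
    unfolding Units_def by (auto intro!: bexI[of _ "h (Some (-a))"])
  then show "u \<in> Units L"
    unfolding u_def .
  have h_hom: "(\<lambda>k. h (Some k)) \<in> hom integer_group (units_of L)"
    using Units by (intro homI) (simp_all add: units_of_carrier units_of_mult h_mult)
  show h_Some: "h (Some k) = u [^]\<^bsub>units_of L\<^esub> k" for k
    using hom_int_pow[OF h_hom, of 1 k] unfolding u_def by (simp add: units_group)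
  show "inj (\<lambda>k::int. u [^]\<^bsub>units_of L\<^esub> k)"
    using h_inj by (auto intro!: injI simp flip: h_Some dest: injD)
  show "unit_cosets Zmax L h = rcosets\<^bsub>units_of L\<^esub> (range (\<lambda>k::int. u [^]\<^bsub>units_of L\<^esub> k))"
    by (simp add: unit_cosets_def Units_Zmax image_image flip: h_Some)
  show "\<one>\<^bsub>L\<^esub> \<oplus>\<^bsub>L\<^esub> u = u"
    using ring_hom_add[OF hom, of "Some 0" "Some 1"] ring_hom_one[OF hom] by (simp add: u_def)
qed

theorem mainTheorem4:
  fixes L :: "('a, 'b) ring_scheme" and h :: "int option \<Rightarrow> 'a"
  assumes "semifield_ext Zmax L h"
    and "finite (unit_cosets Zmax L h)"
  shows "\<exists>n::int. n > 0 \<and> (\<exists>\<phi>. ext_iso Zmax L h Zmax (Fn_emb n) \<phi>)"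
proof -
  interpret idempotent_semifield L
    using assms(1) by (rule idempotent_semifield_if_ext_Zmax)
  define u where "u = h (Some 1)"
  note u = ext_Zmax_generator[OF assms(1), folded u_def]
  obtain v n where v: "v \<in> Units L" "Units L = range (\<lambda>k::int. v [^]\<^bsub>units_of L\<^esub> k)"
    "inj (\<lambda>k::int. v [^]\<^bsub>units_of L\<^esub> k)"
    and n: "(n::int) > 0" "u = v [^]\<^bsub>units_of L\<^esub> n" and one_le_v: "\<one>\<^bsub>L\<^esub> \<oplus>\<^bsub>L\<^esub> v = v"
    by (rule Units_infinite_cyclic_if_finite_index[OF u(1,3) _ u(5)]) (use assms(2) u(4) in simp)
  obtain \<phi> where \<phi>: "\<phi> \<in> semiring_hom L Zmax" "bij_betw \<phi> (carrier L) (carrier Zmax)"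
    "\<And>k::int. \<phi> (v [^]\<^bsub>units_of L\<^esub> k) = Some k"
    using Zmax_iso_if_Units_infinite_cyclic[OF v one_le_v] by blast
  have "h (Some k) = v [^]\<^bsub>units_of L\<^esub> (n * k)" for k
    using v(1) u(2) units.int_pow_pow by (simp add: n(2) units_of_carrier)
  then have "\<phi> (h (Some k)) = Some (n * k)" for k
    by (simp add: \<phi>(3))
  moreover have "\<phi> (h None) = None"
    using \<phi>(1) assms(1) by (simp add: semifield_ext_def semiring_hom_def)
  ultimately have "\<phi> (h x) = Fn_emb n x" for x
    by (cases x) (simp_all add: Fn_emb_def)
  then show ?thesis
    using n(1) \<phi>(1,2) unfolding ext_iso_def by auto
qed

end
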